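(* Let $q\ge1$ and $t$ be integers with $0\le t<q$, and let $\mathcal{C}_{q,t}^{\mathrm{base}}=\bigcup_{i=0}^{\lfloor (q-t-1)/(t+1)\rfloor}\mathcal{S}_{q-t-i(t+1)}^q.$ If $q\equiv 0\pmod{t+1}$, then $\big(\mathcal{S}_{\mathrm{ins}}^t(\mathcal{C}_{q,t}^{\mathrm{base}})\big)_1$ is an optimal $t$-tail-deletion-correcting code, i.e. it is $t$-tail-deletion-correcting and $\mathsf{DEL}_{\mathrm{cor}}(q,t)=\big|\big(\mathcal{S}_{\mathrm{ins}}^t(\mathcal{C}_{q,t}^{\mathrm{base}})\big)_1\big|=|\mathcal{C}_{q,t}^{\mathrm{base}}|.$ If $q\not\equiv 0\pmod{t+1}$, then $\big(\mathcal{S}_{\mathrm{ins}}^t(\mathcal{C}_{q,t}^{\mathrm{base}})\big)_1\cup\mathcal{S}_1^q$ is an optimal $t$-tail-deletion-correcting code, i.e. it is $t$-tail-deletion-correcting and $\mathsf{DEL}_{\mathrm{cor}}(q,t)=|\mathcal{C}_{q,t}^{\mathrm{base}}|+q.$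
   Context: Let $[q]=\{0,1,\dots,q-1\}$. For $1\le m\le q$, a partial permutation of length $m$ over $[q]$ is a sequence $\pi=(\pi_1,\dots,\pi_m)$ of $m$ pairwise distinct elements of $[q]$; $|\pi|=m$. Let $\mathcal{S}_m^q$ be the set of those of length $m$ (so $\mathcal{S}_1^q$ consists of the $q$ single-symbol sequences) and $\mathcal{S}_{\mathrm{all}}^q=\bigcup_{m=1}^{q}\mathcal{S}_m^q$. A code is any subset of $\mathcal{S}_{\mathrm{all}}^q$. Juxtaposition $\omega\pi$ denotes concatenation with $\omega$ on the left. For $\pi$ of length $m$ and integer $j\ge 0$, $\pi_{\downarrow j}=(\pi_{k+1},\dots,\pi_m)$ with $k=\min(j,m-1)$ (leftmost symbols are deleted; the last symbol is never deleted); $\mathcal{B}_{\mathrm{del}}^t(\pi)=\{\pi_{\downarrow j}:0\le j\le t\}$. A code $\mathcal{C}$ is $t$-tail-deletion-correcting if $\mathcal{B}_{\mathrm{del}}^t(\pi_1)\cap\mathcal{B}_{\mathrm{del}}^t(\pi_2)=\emptyset$ for all distinct $\pi_1,\pi_2\in\mathcal{C}$; $\mathsf{DEL}_{\mathrm{cor}}(q,t)$ is the maximum size of such a code in $\mathcal{S}_{\mathrm{all}}^q$. For $\pi\in\mathcal{S}_{\mathrm{all}}^q$, $\mathcal{S}_{\mathrm{ins}}^t(\pi)$ is the set of all $\omega\pi\in\mathcal{S}_{\mathrm{all}}^q$ with $\omega$ a sequence of exactly $t$ elements of $[q]$ (entries of $\omega\pi$ pairwise distinct). Its elements are listed in increasing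 lexicographic order and $(\mathcal{S}_{\mathrm{ins}}^t(\pi))_1$ denotes the first one. For a code $\mathcal{C}$, $(\mathcal{S}_{\mathrm{ins}}^t(\mathcal{C}))_1=\{(\mathcal{S}_{\mathrm{ins}}^t(\pi))_1:\pi\in\mathcal{C}\}$. *)

theory Defs
  imports Main "HOL-Library.List_Lexorder"
begin

text \<open>Partial permutations over [q] = {0..<q} are represented as lists of naturals.\<close>

definition S :: "nat \<Rightarrow> nat \<Rightarrow> nat list set" where
  "S m q = {xs. length xs = m \<and> distinct xs \<and> set xs \<subseteq> {..<q}}"

definition S_all :: "nat \<Rightarrow> nat list set" where
  "S_all q = (\<Union>m\<in>{1..q}. S m q)"

text \<open>Deletion of the j leftmost symbols, never deleting the last symbol.\<close>
definition tail_del :: "nat list \<Rightarrow> nat \<Rightarrow> nat list" where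
  "tail_del xs j = drop (min j (length xs - 1)) xs"

definition B_del :: "nat \<Rightarrow> nat list \<Rightarrow> nat list set" where
  "B_del t xs = {tail_del xs j | j. j \<le> t}"

definition tail_del_correcting :: "nat \<Rightarrow> nat list set \<Rightarrow> bool" where
  "tail_del_correcting t C =
     (\<forall>p1\<in>C. \<forall>p2\<in>C. p1 \<noteq> p2 \<longrightarrow> B_del t p1 \<inter> B_del t p2 = {})"

definition DEL_cor :: "nat \<Rightarrow> nat \<Rightarrow> nat" where
  "DEL_cor q t = Max {card C | C. C \<subseteq> S_all q \<and> tail_del_correcting t C}"

definition S_ins :: "nat \<Rightarrow> nat \<Rightarrow> nat list \<Rightarrow> nat list set" where
  "S_ins q t xs = {w @ xs | w. length w = t \<and> set w \<subseteq> {..<q} \<and> w @ xs \<in> S_all q}"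

text \<open>First element in increasing lexicographic order (List_Lexorder; all
  elements have equal length).\<close>
definition first_ins :: "nat \<Rightarrow> nat \<Rightarrow> nat list \<Rightarrow> nat list" where
  "first_ins q t xs = Min (S_ins q t xs)"

definition C_base :: "nat \<Rightarrow> nat \<Rightarrow> nat list set" where
  "C_base q t = (\<Union>i\<in>{0..(q - t - 1) div (t + 1)}. S (q - t - i * (t + 1)) q)"

end

theory Submission
  imports Defs
begin

text \<open>Prefixing \<open>t\<close> symbols to a base word of length \<open>q - t - i(t+1)\<close> gives a codeword
  of length \<open>q - i(t+1)\<close>. These lengths exceed \<open>t\<close> and are all congruent to \<open>q\<close> modulo
  \<open>t+1\<close>, so two deletion balls can only meet at equal deletion depths, and then the base
  words, being what remains after deleting \<open>t\<close> symbols, coincide. A singleton only meets the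
  ball of a word of length \<open>t+1\<close>, which does not occur when \<open>t+1\<close> does not divide \<open>q\<close>.
  Conversely, in any \<open>t\<close>-tail-deletion-correcting code the words with length in a window
  \<open>[m, m+t]\<close> have pairwise distinct suffixes of length \<open>m\<close>, so there are at most
  \<open>|S_m^q|\<close> of them. The windows starting at the base lengths cover every length except
  those up to \<open>t\<close> when \<open>t+1\<close> does not divide \<open>q\<close>; these fall into the window \<open>[1, t+1]\<close>.\<close>

lemma finite_S: "finite (S m q)"
proof (rule finite_subset)
  show "S m q \<subseteq> {xs. set xs \<subseteq> {..<q} \<and> length xs = m}"
    by (auto simp: S_def)
  show "finite {xs. set xs \<subseteq> {..<q} \<and> length xs = m}"
    by (rule finite_lists_length_eq) simp
qed

lemma finite_S_all: "finite (S_all q)"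
  unfolding S_all_def using finite_S by auto

lemma mem_S_all_iff:
  "xs \<in> S_all q \<longleftrightarrow> 1 \<le> length xs \<and> length xs \<le> q \<and> distinct xs \<and> set xs \<subseteq> {..<q}"
  by (auto simp: S_all_def S_def)

lemma S_1_eq: "S 1 q = (\<lambda>a. [a]) ` {..<q}"
  by (auto simp: S_def length_Suc_conv)

lemma card_S_1: "card (S 1 q) = q"
  unfolding S_1_eq by (simp add: card_image inj_on_def)

lemma S_1_subset_S_all: "1 \<le> q \<Longrightarrow> S 1 q \<subseteq> S_all q"
  by (auto simp: S_all_def)

subsection \<open>Deletion balls\<close>

lemma B_del_eq_drops: "t < length p \<Longrightarrow> B_del t p = (\<lambda>j. drop j p) ` {..t}"
  by (fastforce simp: B_del_def tail_del_def min_def)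

lemma B_del_singleton: "B_del t [a] = {[a]}"
  by (auto simp: B_del_def tail_del_def)

lemma tail_del_correcting_if_congruent_lengths:
  assumes long: "\<forall>p\<in>D. t < length p"
    and congruent: "\<forall>p1\<in>D. \<forall>p2\<in>D. length p1 mod (t + 1) = length p2 mod (t + 1)"
    and inj: "inj_on (drop t) D"
  shows "tail_del_correcting t D"
  unfolding tail_del_correcting_def
proof (intro ballI impI)
  fix p1 p2 assume p: "p1 \<in> D" "p2 \<in> D" "p1 \<noteq> p2"
  show "B_del t p1 \<inter> B_del t p2 = {}"
  proof (rule ccontr)
    assume "B_del t p1 \<inter> B_del t p2 \<noteq> {}"
    moreover have "t < length p1" "t < length p2"
      using long p by auto
    ultimately obtain j1 j2 where j: "j1 \<le> t" "j2 \<le> t" and z: "drop j1 p1 = drop j2 p2"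
      by (auto simp: B_del_eq_drops)
    have "length p1 + j2 = length p2 + j1"
      using arg_cong[OF z, of length] j \<open>t < length p1\<close> \<open>t < length p2\<close> by simp
    then have "(length p2 + j2) mod (t + 1) = (length p2 + j1) mod (t + 1)"
      using congruent p by (metis mod_add_left_eq)
    then have "j2 mod (t + 1) = j1 mod (t + 1)"
      by (simp add: nat_mod_eq_iff)
    then have "j1 = j2"
      using j by simp
    have "drop t p1 = drop (t - j1) (drop j1 p1)" "drop t p2 = drop (t - j2) (drop j2 p2)"
      using j by simp_all
    then have "drop t p1 = drop t p2"
      using z \<open>j1 = j2\<close> by (simp del: drop_drop)
    then show False
      using inj p by (auto dest: inj_onD)
  qed
qed

lemma tail_del_correcting_Un_S_1:
  assumes correcting: "tail_del_correcting t D" and long: "\<forall>p\<in>D. t + 1 < length p"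
  shows "tail_del_correcting t (D \<union> S 1 q)"
proof -
  have apart: "B_del t p \<inter> B_del t [a] = {}" if "p \<in> D" for p a
  proof -
    have "t < length p" "\<forall>j\<le>t. length (drop j p) \<noteq> 1"
      using that long by auto
    then show ?thesis
      by (auto simp: B_del_eq_drops B_del_singleton dest!: arg_cong[of _ _ length])
  qed
  show ?thesis
    unfolding tail_del_correcting_def
  proof (intro ballI impI)
    fix p1 p2 assume p: "p1 \<in> D \<union> S 1 q" "p2 \<in> D \<union> S 1 q" "p1 \<noteq> p2"
    consider "p1 \<in> D" "p2 \<in> D" | a b where "p1 = [a]" "p2 = [b]" | a where "p1 \<in> D" "p2 = [a]"
      | a where "p1 = [a]" "p2 \<in> D"
      using p(1,2) unfolding S_1_eq by blast
    then show "B_del t p1 \<inter> B_del t p2 = {}"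
    proof cases
      case 1
      then show ?thesis using correcting p(3) by (simp add: tail_del_correcting_def)
    next
      case 2
      then show ?thesis using p(3) by (simp add: B_del_singleton)
    next
      case 3
      then show ?thesis using apart by simp
    next
      case 4
      then show ?thesis using apart by blast
    qed
  qed
qed

subsection \<open>Upper bound\<close>

lemma card_length_window_le:
  assumes correcting: "tail_del_correcting t C" and "C \<subseteq> S_all q" "1 \<le> m"
  shows "card {p\<in>C. m \<le> length p \<and> length p \<le> m + t} \<le> card (S m q)"
proof -
  let ?W = "{p\<in>C. m \<le> length p \<and> length p \<le> m + t}"
  let ?suffix = "\<lambda>p. drop (length p - m) p"
  have in_ball: "?suffix p \<in> B_del t p" if "p \<in> ?W" for p
  proof -
    have "tail_del p (length p - m) = ?suffix p"
      using that \<open>1 \<le> m\<close> by (simp add: tail_del_def)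
    then show ?thesis
      using that unfolding B_del_def by (auto intro!: exI[of _ "length p - m"])
  qed
  have "inj_on ?suffix ?W"
  proof (rule inj_onI, rule ccontr)
    fix p1 p2 assume p: "p1 \<in> ?W" "p2 \<in> ?W" "?suffix p1 = ?suffix p2" "p1 \<noteq> p2"
    then have "B_del t p1 \<inter> B_del t p2 = {}"
      using correcting unfolding tail_del_correcting_def by blast
    then show False
      using in_ball[OF p(1)] in_ball[OF p(2)] p(3) by auto
  qed
  moreover have "?suffix p \<in> S m q" if "p \<in> ?W" for p
  proof -
    have "p \<in> S_all q"
      using that \<open>C \<subseteq> S_all q\<close> by blast
    then show ?thesis
      using that by (auto simp: mem_S_all_iff S_def dest: in_set_dropD)
  qed
  ultimately show ?thesis
    using card_inj_on_le[of ?suffix ?W "S m q"] finite_S by blast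
qed

lemma length_in_base_window:
  fixes q t L :: nat
  assumes "t < q" "1 \<le> L" "L \<le> q"
  shows "(\<exists>i\<le>(q - t - 1) div (t + 1). q - t - i * (t + 1) \<le> L \<and> L \<le> q - t - i * (t + 1) + t)
    \<or> (q mod (t + 1) \<noteq> 0 \<and> L \<le> t)"
proof -
  define i where "i = (q - L) div (t + 1)"
  have below: "i * (t + 1) \<le> q - L" and above: "q - L \<le> i * (t + 1) + t"
    using div_mult_mod_eq[of "q - L" "t + 1"] mod_less_divisor[of "t + 1" "q - L"]
    unfolding i_def by linarith+
  show ?thesis
  proof (cases "i \<le> (q - t - 1) div (t + 1)")
    case True
    then have "i * (t + 1) \<le> q - t - 1"
      by (simp add: less_eq_div_iff_mult_less_eq)
    then show ?thesis
      using True below above assms by (intro disjI1 exI[of _ i] conjI) linarith+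
  next
    case False
    then have "q - t - 1 < i * (t + 1)"
      by (simp add: less_eq_div_iff_mult_less_eq)
    then have r: "1 \<le> q - i * (t + 1)" "q - i * (t + 1) \<le> t"
      using below assms by linarith+
    have "q mod (t + 1) = (q - i * (t + 1) + i * (t + 1)) mod (t + 1)"
      using below by simp
    also have "\<dots> = q - i * (t + 1)"
      using r by (simp only: mod_mult_self1) simp
    finally show ?thesis
      using r below assms by (intro disjI2 conjI) linarith+
  qed
qed

lemma card_C_base:
  "card (C_base q t) = (\<Sum>i\<in>{0..(q - t - 1) div (t + 1)}. card (S (q - t - i * (t + 1)) q))"
  unfolding C_base_def
proof (rule card_UN_disjoint)
  show "\<forall>i\<in>{0..(q - t - 1) div (t + 1)}. \<forall>j\<in>{0..(q - t - 1) div (t + 1)}. i \<noteq> j \<longrightarrow>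
      S (q - t - i * (t + 1)) q \<inter> S (q - t - j * (t + 1)) q = {}"
  proof (intro ballI impI)
    fix i j assume ij: "i \<in> {0..(q - t - 1) div (t + 1)}" "j \<in> {0..(q - t - 1) div (t + 1)}" "i \<noteq> j"
    then have "i * (t + 1) \<le> q - t - 1" "j * (t + 1) \<le> q - t - 1"
      by (auto simp: less_eq_div_iff_mult_less_eq)
    moreover have "i * (t + 1) \<noteq> j * (t + 1)"
      using ij(3) by (simp only: mult_cancel2) simp
    ultimately have "q - t - i * (t + 1) \<noteq> q - t - j * (t + 1)"
      by linarith
    then show "S (q - t - i * (t + 1)) q \<inter> S (q - t - j * (t + 1)) q = {}"
      by (auto simp: S_def)
  qed
qed (auto simp: finite_S)

lemma card_base_windows_le:
  assumes "t < q" "tail_del_correcting t C" "C \<subseteq> S_all q"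
  shows "card (\<Union>i\<in>{0..(q - t - 1) div (t + 1)}.
      {p\<in>C. q - t - i * (t + 1) \<le> length p \<and> length p \<le> q - t - i * (t + 1) + t})
    \<le> card (C_base q t)"
proof -
  let ?k = "(q - t - 1) div (t + 1)"
  define m where "m i = q - t - i * (t + 1)" for i
  have "card (\<Union>i\<in>{0..?k}. {p\<in>C. m i \<le> length p \<and> length p \<le> m i + t})
      \<le> (\<Sum>i\<in>{0..?k}. card {p\<in>C. m i \<le> length p \<and> length p \<le> m i + t})"
    by (rule card_UN_le) simp
  also have "\<dots> \<le> (\<Sum>i\<in>{0..?k}. card (S (m i) q))"
  proof (rule sum_mono)
    fix i assume "i \<in> {0..?k}"
    then have "i * (t + 1) \<le> q - t - 1"
      by (simp add: less_eq_div_iff_mult_less_eq)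
    then have "1 \<le> m i"
      unfolding m_def using \<open>t < q\<close> by linarith
    then show "card {p\<in>C. m i \<le> length p \<and> length p \<le> m i + t} \<le> card (S (m i) q)"
      using card_length_window_le assms(2,3) by blast
  qed
  also have "\<dots> = card (C_base q t)"
    unfolding m_def card_C_base ..
  finally show ?thesis
    unfolding m_def .
qed

lemma card_le_if_tail_del_correcting:
  assumes "t < q" and correcting: "tail_del_correcting t C" and C: "C \<subseteq> S_all q"
  shows "card C \<le> card (C_base q t) + (if q mod (t + 1) = 0 then 0 else q)"
proof -
  define windows where "windows = (\<Union>i\<in>{0..(q - t - 1) div (t + 1)}.
      {p\<in>C. q - t - i * (t + 1) \<le> length p \<and> length p \<le> q - t - i * (t + 1) + t})"
  define short where "short = {p\<in>C. q mod (t + 1) \<noteq> 0 \<and> length p \<le> t}"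
  have "finite C"
    using C finite_S_all finite_subset by blast
  have cover: "C \<subseteq> windows \<union> short"
  proof
    fix p assume "p \<in> C"
    then have "1 \<le> length p" "length p \<le> q"
      using C by (auto simp: mem_S_all_iff)
    then show "p \<in> windows \<union> short"
      using length_in_base_window[OF \<open>t < q\<close> \<open>1 \<le> length p\<close> \<open>length p \<le> q\<close>] \<open>p \<in> C\<close>
      unfolding windows_def short_def by auto
  qed
  have "windows \<union> short \<subseteq> C"
    by (auto simp: windows_def short_def)
  then have "card C \<le> card (windows \<union> short)"
    using cover \<open>finite C\<close> by (metis card_mono finite_subset)
  also have "\<dots> \<le> card windows + card short"
    by (rule card_Un_le)
  finally have "card C \<le> card windows + card short" .
  moreover have "card windows \<le> card (C_base q t)"
    unfolding windows_def using card_base_windows_le[OF assms] .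
  moreover have "card short \<le> (if q mod (t + 1) = 0 then 0 else q)"
  proof (cases "q mod (t + 1) = 0")
    case False
    have "card short \<le> card {p\<in>C. 1 \<le> length p \<and> length p \<le> 1 + t}"
      using \<open>finite C\<close> C unfolding short_def by (intro card_mono) (auto simp: mem_S_all_iff)
    also have "\<dots> \<le> q"
      using card_length_window_le[OF correcting C, of 1] card_S_1 by simp
    finally show ?thesis
      using False by simp
  qed (simp add: short_def)
  ultimately show ?thesis
    by linarith
qed

subsection \<open>The construction\<close>

lemma S_ins_nonempty:
  assumes "x \<in> S m q" "0 < m + t" "m + t \<le> q"
  shows "S_ins q t x \<noteq> {}"
proof -
  have "card ({..<q} - set x) = q - m"
    using assms(1) by (auto simp: S_def card_Diff_subset distinct_card)
  then have "t \<le> card ({..<q} - set x)"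
    using assms(3) by simp
  then obtain T where T: "T \<subseteq> {..<q} - set x" "card T = t" "finite T"
    using obtain_subset_with_card_n by metis
  define w where "w = sorted_list_of_set T"
  have "length w = t" "distinct w" "set w = T"
    using T by (auto simp: w_def)
  then have "w @ x \<in> S_ins q t x"
    unfolding S_ins_def using T assms by (auto simp: mem_S_all_iff S_def Suc_le_eq)
  then show ?thesis
    by blast
qed

lemma first_ins_mem_S_ins:
  assumes "x \<in> S m q" "0 < m + t" "m + t \<le> q"
  shows "first_ins q t x \<in> S_ins q t x"
proof -
  have "finite (S_ins q t x)"
    by (rule finite_subset[OF _ finite_S_all[of q]]) (auto simp: S_ins_def)
  then show ?thesis
    unfolding first_ins_def using Min_in S_ins_nonempty[OF assms] by blast
qed

lemma first_ins_C_base: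
  assumes "t < q" "x \<in> C_base q t"
  shows "first_ins q t x \<in> S_all q"
    and "drop t (first_ins q t x) = x"
    and "t < length (first_ins q t x)"
    and "length (first_ins q t x) mod (t + 1) = q mod (t + 1)"
proof -
  obtain i where i: "i \<le> (q - t - 1) div (t + 1)" "x \<in> S (q - t - i * (t + 1)) q"
    using assms(2) by (auto simp: C_base_def)
  have "i * (t + 1) \<le> q - t - 1"
    using i(1) by (simp add: less_eq_div_iff_mult_less_eq)
  then have "0 < q - t - i * (t + 1) + t" "q - t - i * (t + 1) + t \<le> q"
    using assms(1) by linarith+
  then obtain w where w: "first_ins q t x = w @ x" "length w = t" "w @ x \<in> S_all q"
    using first_ins_mem_S_ins[OF i(2)] by (auto simp: S_ins_def)
  have len: "length (first_ins q t x) = q - i * (t + 1)" "i * (t + 1) < q - t"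
    using w i(2) \<open>i * (t + 1) \<le> q - t - 1\<close> assms(1) by (auto simp: S_def)
  show "first_ins q t x \<in> S_all q" "drop t (first_ins q t x) = x"
    using w by simp_all
  show "t < length (first_ins q t x)"
    using len by linarith
  have "q mod (t + 1) = (q - i * (t + 1) + i * (t + 1)) mod (t + 1)"
    using len(2) by simp
  then show "length (first_ins q t x) mod (t + 1) = q mod (t + 1)"
    using len(1) by (simp only: mod_mult_self1)
qed

lemma tail_del_correcting_first_ins_C_base:
  assumes "t < q"
  shows "tail_del_correcting t (first_ins q t ` C_base q t)"
proof (rule tail_del_correcting_if_congruent_lengths)
  show "\<forall>p\<in>first_ins q t ` C_base q t. t < length p"
    using first_ins_C_base(3)[OF assms] by blast
  show "\<forall>p1\<in>first_ins q t ` C_base q t. \<forall>p2\<in>first_ins q t ` C_base q t.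
      length p1 mod (t + 1) = length p2 mod (t + 1)"
    using first_ins_C_base(4)[OF assms] by force
  show "inj_on (drop t) (first_ins q t ` C_base q t)"
    using first_ins_C_base(2)[OF assms] by (auto intro: inj_onI)
qed

lemma card_first_ins_C_base:
  "t < q \<Longrightarrow> card (first_ins q t ` C_base q t) = card (C_base q t)"
  by (intro card_image inj_on_inverseI[where g = "drop t"]) (rule first_ins_C_base(2))

lemma first_ins_C_base_length_gt:
  assumes "t < q" "q mod (t + 1) \<noteq> 0" "p \<in> first_ins q t ` C_base q t"
  shows "t + 1 < length p"
proof -
  have "t < length p" "length p mod (t + 1) \<noteq> 0"
    using first_ins_C_base(3,4)[OF assms(1)] assms(2,3) by auto
  then show ?thesis
    by (cases "length p = t + 1") auto
qed

lemma card_first_ins_C_base_Un_S_1: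
  assumes "t < q" "q mod (t + 1) \<noteq> 0"
  shows "card (first_ins q t ` C_base q t \<union> S 1 q) = card (C_base q t) + q"
proof -
  have "first_ins q t ` C_base q t \<inter> S 1 q = {}"
    using first_ins_C_base_length_gt[OF assms] by (fastforce simp: S_def)
  moreover have "finite (first_ins q t ` C_base q t)"
    by (simp add: C_base_def finite_S)
  ultimately show ?thesis
    using card_first_ins_C_base[OF assms(1)] card_S_1 finite_S
    by (simp add: card_Un_disjoint)
qed

lemma DEL_cor_eqI:
  assumes "D \<subseteq> S_all q" "tail_del_correcting t D"
    and "\<And>C. C \<subseteq> S_all q \<Longrightarrow> tail_del_correcting t C \<Longrightarrow> card C \<le> card D"
  shows "DEL_cor q t = card D"
  unfolding DEL_cor_def
proof (rule Max_eqI)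
  have "{card C |C. C \<subseteq> S_all q \<and> tail_del_correcting t C} \<subseteq> card ` Pow (S_all q)"
    by auto
  then show "finite {card C |C. C \<subseteq> S_all q \<and> tail_del_correcting t C}"
    using finite_S_all finite_subset by blast
  show "card D \<in> {card C |C. C \<subseteq> S_all q \<and> tail_del_correcting t C}"
    using assms(1,2) by blast
  fix n assume "n \<in> {card C |C. C \<subseteq> S_all q \<and> tail_del_correcting t C}"
  then show "n \<le> card D"
    using assms(3) by blast
qed

theorem mainTheorem10:
  fixes q t :: nat
  assumes "q \<ge> 1" and "t < q"
  shows "(q mod (t + 1) = 0 \<longrightarrow>
            (first_ins q t ` C_base q t \<subseteq> S_all q
             \<and> tail_del_correcting t (first_ins q t ` C_base q t)
             \<and> DEL_cor q t = card (first_ins q t ` C_base q t)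
             \<and> DEL_cor q t = card (C_base q t)))
       \<and> (q mod (t + 1) \<noteq> 0 \<longrightarrow>
            (first_ins q t ` C_base q t \<union> S 1 q \<subseteq> S_all q
             \<and> tail_del_correcting t (first_ins q t ` C_base q t \<union> S 1 q)
             \<and> DEL_cor q t = card (first_ins q t ` C_base q t \<union> S 1 q)
             \<and> DEL_cor q t = card (C_base q t) + q))"
proof (intro conjI impI)
  let ?F = "first_ins q t ` C_base q t"
  have code: "?F \<subseteq> S_all q"
    using first_ins_C_base(1)[OF \<open>t < q\<close>] by blast
  note correcting = tail_del_correcting_first_ins_C_base[OF \<open>t < q\<close>]
  note bound = card_le_if_tail_del_correcting[OF \<open>t < q\<close>]
  {
    assume divisible: "q mod (t + 1) = 0"
    show "?F \<subseteq> S_all q" "tail_del_correcting t ?F"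
      using code correcting .
    show "DEL_cor q t = card ?F"
      by (rule DEL_cor_eqI[OF code correcting])
        (use bound card_first_ins_C_base[OF \<open>t < q\<close>] divisible in simp)
    then show "DEL_cor q t = card (C_base q t)"
      using card_first_ins_C_base[OF \<open>t < q\<close>] by simp
  next
    assume not_divisible: "q mod (t + 1) \<noteq> 0"
    note card_eq = card_first_ins_C_base_Un_S_1[OF \<open>t < q\<close> not_divisible]
    show code': "?F \<union> S 1 q \<subseteq> S_all q"
      using code S_1_subset_S_all \<open>q \<ge> 1\<close> by blast
    show correcting': "tail_del_correcting t (?F \<union> S 1 q)"
      using tail_del_correcting_Un_S_1 correcting first_ins_C_base_length_gt[OF \<open>t < q\<close> not_divisible]
      by blast
    show "DEL_cor q t = card (?F \<union> S 1 q)"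
      by (rule DEL_cor_eqI[OF code' correcting']) (use bound card_eq not_divisible in simp)
    then show "DEL_cor q t = card (C_base q t) + q"
      using card_eq by simp
  }
qed

end
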